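(* Let $\mathcal D=(A,D)$ be a dependence alphabet and $\mathcal L\subseteq\mathbb M(\mathcal D)$ rational. Then there are a dependence alphabet $\mathcal D'=(A',D')$ with $A\subseteq A'$ and $D=D'\cap(A\times A)$, a trace-pushdown system $\mathcal P=(Q,\Delta)$ over $\mathcal D'$, a configuration $c$ of $\mathcal P$ and a state $q\in Q$ such that $\mathcal L=\{[w]\mid w\in A^*,\ c\vdash^*_{\mathcal P}(q,[w])\}$.
   Context: A dependence alphabet is $\mathcal D=(A,D)$, $A$ finite, $D\subseteq A\times A$ reflexive and symmetric. $D(a)=\{c\mid(a,c)\in D\}$, $D(w)=\bigcup_{a\text{ in }w}D(a)$. Letters $a,b$ independent if $(a,b)\notin D$; $u\parallel v$ if every letter of $u$ is independent of every letter of $v$. $\sim$ least congruence on $A^*$ with $ab\sim ba$ for independent $a,b$; $\mathbb M(\mathcal D)=A^*/{\sim}$; $[w]$ class of $w$. A trace language $\mathcal L$ is rational if $\mathcal L=[L]$ for a regular $L\subseteq A^*$. Since $D=D'\cap(A\times A)$, for $w,w'\in A^*$ we have $w\sim_{\mathcal D}w'$ iff $w\sim_{\mathcal D'}w'$, so $\mathbb M(\mathcal D)$ is identified with the submonoid of $\mathbb M(\mathcal D')$ generated by $A$, and $[w]$ for $w\in A^*$ is read in either monoid. Pushdown system over $\mathcal D'$: $\mathcal P=(Q,\Delta)$, $Q$ finite, $\Delta\subseteq Q\times A'\times A'^*\times Q$ finite; configurations $Q\times\mathbb M(\mathcal D')$; $(p,s)\vdash_{\mathcal P}(q,t)$ iff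 there are $(p,a,w,q)\in\Delta$, $x\in A'^*$ with $s=[ax]$, $t=[wx]$; $\vdash^*_{\mathcal P}$ reflexive transitive closure. Trace-pushdown system: (P1) $D'(w)\subseteq D'(a)$ for all $(p,a,w,q)\in\Delta$; (P2') whenever $(p,a,v,q),(q,b,w,r)\in\Delta$ with $av\parallel bw$ (w.r.t. $D'$) there is $q'$ with $(p,b,w,q'),(q',a,v,r)\in\Delta$. *)

theory Defs
  imports Main
begin

definition dep_alphabet :: "'a set \<Rightarrow> ('a \<times> 'a) set \<Rightarrow> bool" where
  "dep_alphabet A D \<longleftrightarrow> finite A \<and> D \<subseteq> A \<times> A \<and>
     (\<forall>a\<in>A. (a, a) \<in> D) \<and> (\<forall>a b. (a, b) \<in> D \<longrightarrow> (b, a) \<in> D)"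

definition Dof :: "('a \<times> 'a) set \<Rightarrow> 'a set \<Rightarrow> 'a set" where
  "Dof D S = {c. \<exists>a\<in>S. (a, c) \<in> D}"

definition indep_words :: "('a \<times> 'a) set \<Rightarrow> 'a list \<Rightarrow> 'a list \<Rightarrow> bool" where
  "indep_words D u v \<longleftrightarrow> (\<forall>a\<in>set u. \<forall>b\<in>set v. (a, b) \<notin> D)"

definition swap_step :: "'a set \<Rightarrow> ('a \<times> 'a) set \<Rightarrow> 'a list \<Rightarrow> 'a list \<Rightarrow> bool" where
  "swap_step A D u v \<longleftrightarrow> (\<exists>x y a b. a \<in> A \<and> b \<in> A \<and> (a, b) \<notin> D \<and>
      u = x @ [a, b] @ y \<and> v = x @ [b, a] @ y)"

definition tequiv :: "'a set \<Rightarrow> ('a \<times> 'a) set \<Rightarrow> 'a list \<Rightarrow> 'a list \<Rightarrow> bool" where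
  "tequiv A D = (swap_step A D)\<^sup>*\<^sup>*"

definition tr :: "'a set \<Rightarrow> ('a \<times> 'a) set \<Rightarrow> 'a list \<Rightarrow> 'a list set" where
  "tr A D w = {v. tequiv A D w v}"

definition nfa_accepts :: "('s \<times> 'a \<times> 's) set \<Rightarrow> 's \<Rightarrow> 's set \<Rightarrow> 'a list \<Rightarrow> bool" where
  "nfa_accepts \<delta> s0 F w \<longleftrightarrow> (\<exists>r. length r = Suc (length w) \<and> r ! 0 = s0 \<and> r ! length w \<in> F \<and>
      (\<forall>i < length w. (r ! i, w ! i, r ! Suc i) \<in> \<delta>))"

definition regular :: "'a set \<Rightarrow> 'a list set \<Rightarrow> bool" where
  "regular A L \<longleftrightarrow> L \<subseteq> lists A \<and> (\<exists>(S :: nat set) \<delta> s0 F. finite S \<and> s0 \<in> S \<and> F \<subseteq> S \<and>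
      \<delta> \<subseteq> S \<times> A \<times> S \<and> L = {w. w \<in> lists A \<and> nfa_accepts \<delta> s0 F w})"

definition rational_trace_lang :: "'a set \<Rightarrow> ('a \<times> 'a) set \<Rightarrow> 'a list set set \<Rightarrow> bool" where
  "rational_trace_lang A D \<L> \<longleftrightarrow> (\<exists>L. regular A L \<and> \<L> = tr A D ` L)"

type_synonym ('s, 'a) rule = "'s \<times> 'a \<times> 'a list \<times> 's"

definition pds :: "'a set \<Rightarrow> 's set \<Rightarrow> ('s, 'a) rule set \<Rightarrow> bool" where
  "pds A Q \<Delta> \<longleftrightarrow> finite Q \<and> finite \<Delta> \<and> \<Delta> \<subseteq> Q \<times> A \<times> lists A \<times> Q"

definition pds_step :: "'a set \<Rightarrow> ('a \<times> 'a) set \<Rightarrow> ('s, 'a) rule set \<Rightarrow>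
    ('s \<times> 'a list set) \<Rightarrow> ('s \<times> 'a list set) \<Rightarrow> bool" where
  "pds_step A D \<Delta> c c' \<longleftrightarrow> (\<exists>p a w q x. (p, a, w, q) \<in> \<Delta> \<and> x \<in> lists A \<and>
      c = (p, tr A D (a # x)) \<and> c' = (q, tr A D (w @ x)))"

definition trace_pds :: "'a set \<Rightarrow> ('a \<times> 'a) set \<Rightarrow> 's set \<Rightarrow> ('s, 'a) rule set \<Rightarrow> bool" where
  "trace_pds A D Q \<Delta> \<longleftrightarrow> pds A Q \<Delta> \<and>
     (\<forall>p a w q. (p, a, w, q) \<in> \<Delta> \<longrightarrow> Dof D (set w) \<subseteq> Dof D {a}) \<and>
     (\<forall>p a v q b w r. (p, a, v, q) \<in> \<Delta> \<and> (q, b, w, r) \<in> \<Delta> \<and> indep_words D (a # v) (b # w)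
        \<longrightarrow> (\<exists>q'. (p, b, w, q') \<in> \<Delta> \<and> (q', a, v, r) \<in> \<Delta>))"

end

theory Submission
  imports Defs
begin

text \<open>Adjoin a fresh letter, the marker, that depends on every letter. Every transition of the
  pushdown system reads the marker, so (P1) is automatic and no two transitions are independent,
  which makes (P2') vacuous. Starting from the stack [marker], the system guesses a final state of
  an automaton for a regular representative language and runs the automaton backwards, pushing
  each letter read just below the marker. On reaching the initial state it pops the marker. Since
  the marker commutes with nothing, a configuration with the marker on top determines the trace
  below it, so the traces left after the pop are exactly the traces of accepted words.\<close>

lemma dep_alphabet_sym: "dep_alphabet A D \<Longrightarrow> sym D"
  unfolding dep_alphabet_def sym_def by blast

lemma tequiv_refl: "tequiv A D u u"
  unfolding tequiv_def by simp

lemma tequiv_sym: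
  assumes "sym D" "tequiv A D u v"
  shows "tequiv A D v u"
proof -
  have "symp (swap_step A D)"
    using assms(1) unfolding swap_step_def sym_def symp_def by blast
  then show ?thesis
    using assms(2) unfolding tequiv_def by (blast dest: sympD[OF symp_rtranclp])
qed

lemma tr_eq_iff:
  assumes "sym D"
  shows "tr A D u = tr A D v \<longleftrightarrow> tequiv A D u v"
proof
  assume "tr A D u = tr A D v"
  then show "tequiv A D u v"
    using tequiv_refl unfolding tr_def by blast
next
  assume uv: "tequiv A D u v"
  moreover have "tequiv A D v u"
    using tequiv_sym[OF assms uv] .
  ultimately show "tr A D u = tr A D v"
    unfolding tr_def tequiv_def by (auto intro: rtranclp_trans)
qed

lemma swap_step_set_eq: "swap_step A D u v \<Longrightarrow> set v = set u"
  unfolding swap_step_def by (elim exE conjE) (simp add: insert_commute)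

lemma tequiv_set_eq: "tequiv A D u v \<Longrightarrow> set v = set u"
  unfolding tequiv_def
  by (induction rule: rtranclp_induct) (simp_all add: swap_step_set_eq)

lemma tr_eq_Nil_iff: "tr A D x = tr A D [] \<longleftrightarrow> x = []"
proof
  assume "tr A D x = tr A D []"
  then have "tequiv A D x []"
    using tequiv_refl unfolding tr_def by blast
  then have "set [] = set x"
    by (rule tequiv_set_eq)
  then show "x = []"
    by simp
qed simp

lemma tequiv_append_left: "tequiv A D x y \<Longrightarrow> tequiv A D (w @ x) (w @ y)"
  unfolding tequiv_def
proof (induction rule: rtranclp_induct)
  case (step y z)
  from step.hyps(2) have "swap_step A D (w @ y) (w @ z)"
    unfolding swap_step_def by (metis append.assoc)
  with step.IH show ?case
    by (rule rtranclp.rtrancl_into_rtrancl)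
qed simp

lemma tr_append_left_cong:
  "sym D \<Longrightarrow> tr A D x = tr A D y \<Longrightarrow> tr A D (w @ x) = tr A D (w @ y)"
  using tr_eq_iff tequiv_append_left by metis

lemma swap_step_Cons_dominant:
  assumes "\<forall>b\<in>A. (h, b) \<in> D" "swap_step A D (h # x) v"
  shows "\<exists>y. v = h # y \<and> swap_step A D x y"
proof -
  obtain x0 y0 a b where ab: "a \<in> A" "b \<in> A" "(a, b) \<notin> D"
    "h # x = x0 @ [a, b] @ y0" "v = x0 @ [b, a] @ y0"
    using assms(2) unfolding swap_step_def by blast
  with assms(1) obtain x1 where "x0 = h # x1"
    by (cases x0) auto
  with ab show ?thesis
    unfolding swap_step_def by auto
qed

lemma tequiv_Cons_dominant:
  assumes "\<forall>b\<in>A. (h, b) \<in> D" "tequiv A D (h # x) v"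
  shows "\<exists>y. v = h # y \<and> tequiv A D x y"
  using assms(2) unfolding tequiv_def
proof (induction rule: rtranclp_induct)
  case (step y z)
  then obtain y' where "y = h # y'" "(swap_step A D)\<^sup>*\<^sup>* x y'"
    by blast
  with swap_step_Cons_dominant[OF assms(1)] step.hyps(2) show ?case
    by (metis rtranclp.rtrancl_into_rtrancl)
qed simp

lemma tr_Cons_dominant_eq_iff:
  assumes "sym D" "\<forall>b\<in>A. (h, b) \<in> D"
  shows "tr A D (h # x) = tr A D (h # y) \<longleftrightarrow> tr A D x = tr A D y"
proof
  assume "tr A D (h # x) = tr A D (h # y)"
  then obtain y' where "h # y = h # y'" "tequiv A D x y'"
    using tequiv_Cons_dominant[OF assms(2)] tr_eq_iff[OF assms(1)] by blast
  then show "tr A D x = tr A D y"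
    using tr_eq_iff[OF assms(1)] by simp
next
  assume "tr A D x = tr A D y"
  then show "tr A D (h # x) = tr A D (h # y)"
    using tr_append_left_cong[OF assms(1), of A x y "[h]"] by simp
qed

lemma swap_step_map:
  assumes "\<And>a b. (a, b) \<in> D \<Longrightarrow> (f a, f b) \<in> D'" "x \<in> lists A"
    and "swap_step A' D' (map f x) v"
  shows "\<exists>y. v = map f y \<and> swap_step A D x y"
proof -
  obtain x0 y0 a b where ab: "(a, b) \<notin> D'" "map f x = x0 @ [a, b] @ y0" "v = x0 @ [b, a] @ y0"
    using assms(3) unfolding swap_step_def by blast
  then obtain us a' b' vs where x: "x = us @ [a', b'] @ vs"
    and images: "x0 = map f us" "a = f a'" "b = f b'" "y0 = map f vs"
    by (auto simp: map_eq_append_conv map_eq_Cons_conv)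
  have "swap_step A D x (us @ [b', a'] @ vs)"
    unfolding swap_step_def using x images ab(1) assms(1,2)
    by (intro exI[of _ us] exI[of _ vs] exI[of _ a'] exI[of _ b']) auto
  moreover have "v = map f (us @ [b', a'] @ vs)"
    using ab(3) images by simp
  ultimately show ?thesis by blast
qed

lemma tequiv_map:
  assumes "\<And>a b. (a, b) \<in> D \<Longrightarrow> (f a, f b) \<in> D'" "x \<in> lists A"
    and "tequiv A' D' (map f x) v"
  shows "\<exists>y. v = map f y \<and> tequiv A D x y"
  using assms(3) unfolding tequiv_def
proof (induction rule: rtranclp_induct)
  case base
  show ?case
    by blast
next
  case (step y z)
  then obtain y' where y': "y = map f y'" "(swap_step A D)\<^sup>*\<^sup>* x y'"
    by blast
  have "set y' = set x"
    using y'(2) tequiv_set_eq unfolding tequiv_def by metis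
  then have "y' \<in> lists A"
    using assms(2) by (simp add: in_lists_conv_set)
  moreover have "swap_step A' D' (map f y') z"
    using step.hyps(2) y'(1) by simp
  ultimately obtain z' where "z = map f z'" "swap_step A D y' z'"
    using swap_step_map[where f = f, OF assms(1)] by blast
  with y'(2) show ?case
    using rtranclp.rtrancl_into_rtrancl by fast
qed

lemma tr_map_inj_eqD:
  assumes "inj f" "\<And>a b. (a, b) \<in> D \<Longrightarrow> (f a, f b) \<in> D'" "sym D" "sym D'" "x \<in> lists A"
    and "tr A' D' (map f x) = tr A' D' (map f y)"
  shows "tr A D x = tr A D y"
proof -
  have "tequiv A' D' (map f x) (map f y)"
    using assms(6) tr_eq_iff[OF assms(4)] by blast
  then obtain y' where "map f y = map f y'" "tequiv A D x y'"
    using tequiv_map[where f = f, OF assms(2,5)] by blast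
  moreover from this(1) have "y' = y"
    using assms(1) by (simp add: inj_map_eq_map)
  ultimately show ?thesis
    using tr_eq_iff[OF assms(3)] by simp
qed

lemma pds_stepI:
  "(p, a, w, q) \<in> \<Delta> \<Longrightarrow> x \<in> lists A \<Longrightarrow>
    pds_step A D \<Delta> (p, tr A D (a # x)) (q, tr A D (w @ x))"
  unfolding pds_step_def by blast

fun accepts_from :: "('s \<times> 'a \<times> 's) set \<Rightarrow> 's set \<Rightarrow> 's \<Rightarrow> 'a list \<Rightarrow> bool" where
  "accepts_from \<delta> F s [] \<longleftrightarrow> s \<in> F"
| "accepts_from \<delta> F s (a # u) \<longleftrightarrow> (\<exists>s'. (s, a, s') \<in> \<delta> \<and> accepts_from \<delta> F s' u)"

lemma nfa_accepts_iff_accepts_from: "nfa_accepts \<delta> s F u \<longleftrightarrow> accepts_from \<delta> F s u"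
proof (induction u arbitrary: s)
  case Nil
  show ?case
    unfolding nfa_accepts_def by (auto intro: exI[of _ "[s]"])
next
  case (Cons a u)
  show ?case
  proof
    assume "nfa_accepts \<delta> s F (a # u)"
    then obtain r where r: "length r = Suc (length (a # u))" "r ! 0 = s" "r ! length (a # u) \<in> F"
      "\<forall>i < length (a # u). (r ! i, (a # u) ! i, r ! Suc i) \<in> \<delta>"
      unfolding nfa_accepts_def by blast
    have "nfa_accepts \<delta> (r ! 1) F u"
      unfolding nfa_accepts_def using r by (intro exI[of _ "tl r"]) (auto simp: nth_tl)
    moreover have "(s, a, r ! 1) \<in> \<delta>"
      using r(4)[rule_format, of 0] r(2) by simp
    ultimately show "accepts_from \<delta> F s (a # u)"
      using Cons.IH by auto
  next
    assume "accepts_from \<delta> F s (a # u)"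
    then obtain s' where s': "(s, a, s') \<in> \<delta>" "accepts_from \<delta> F s' u"
      by auto
    then obtain r where r: "length r = Suc (length u)" "r ! 0 = s'" "r ! length u \<in> F"
      "\<forall>i < length u. (r ! i, u ! i, r ! Suc i) \<in> \<delta>"
      using Cons.IH unfolding nfa_accepts_def by blast
    show "nfa_accepts \<delta> s F (a # u)"
      unfolding nfa_accepts_def
    proof (rule exI[of _ "s # r"], intro conjI allI impI)
      fix i
      assume "i < length (a # u)"
      then show "((s # r) ! i, (a # u) ! i, (s # r) ! Suc i) \<in> \<delta>"
        using r s' by (cases i) auto
    qed (use r in auto)
  qed
qed

definition marker :: "'a + nat" where
  "marker = Inr 0"

definition marked_alphabet :: "'a set \<Rightarrow> ('a + nat) set" where
  "marked_alphabet A = insert marker (Inl ` A)"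

definition marked_dep :: "'a set \<Rightarrow> ('a \<times> 'a) set \<Rightarrow> (('a + nat) \<times> ('a + nat)) set" where
  "marked_dep A D = map_prod Inl Inl ` D \<union> {marker} \<times> marked_alphabet A \<union> marked_alphabet A \<times> {marker}"

lemma Inl_marked_dep_iff [simp]: "(Inl a, Inl b) \<in> marked_dep A D \<longleftrightarrow> (a, b) \<in> D"
  unfolding marked_dep_def marker_def by auto

lemma marker_marked_dep: "\<forall>b\<in>marked_alphabet A. (marker, b) \<in> marked_dep A D"
  unfolding marked_dep_def by auto

lemma dep_alphabet_marked:
  assumes "dep_alphabet A D"
  shows "dep_alphabet (marked_alphabet A) (marked_dep A D)"
  using assms unfolding dep_alphabet_def marked_dep_def marked_alphabet_def by auto

locale marked_nfa =
  fixes A :: "'a set" and D :: "('a \<times> 'a) set"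
    and S :: "nat set" and \<delta> :: "(nat \<times> 'a \<times> nat) set" and s0 :: nat and F :: "nat set"
  assumes dep_alphabet: "dep_alphabet A D"
    and finite_S: "finite S" and s0_in_S: "s0 \<in> S" and F_subset_S: "F \<subseteq> S"
    and \<delta>_subset: "\<delta> \<subseteq> S \<times> A \<times> S"
begin

abbreviation A' :: "('a + nat) set" where
  "A' \<equiv> marked_alphabet A"

abbreviation D' :: "(('a + nat) \<times> ('a + nat)) set" where
  "D' \<equiv> marked_dep A D"

definition states :: "nat set" where
  "states = {0, 1} \<union> (\<lambda>s. s + 2) ` S"

text \<open>An automaton state s becomes the pushdown state s + 2; 0 is the initial and 1 the final
  pushdown state.\<close>

definition rules :: "(nat, 'a + nat) rule set" where
  "rules = (\<lambda>f. (0, marker, [marker], f + 2)) ` F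
     \<union> (\<lambda>(s, a, t). (t + 2, marker, [marker, Inl a], s + 2)) ` \<delta>
     \<union> {(s0 + 2, marker, [], 1)}"

abbreviation reaches :: "nat \<times> ('a + nat) list set \<Rightarrow> bool" where
  "reaches c \<equiv> (pds_step A' D' rules)\<^sup>*\<^sup>* (0, tr A' D' [marker]) c"

definition run_config :: "nat \<times> ('a + nat) list set \<Rightarrow> bool" where
  "run_config c \<longleftrightarrow> c = (0, tr A' D' [marker])
     \<or> (\<exists>s u. u \<in> lists A \<and> accepts_from \<delta> F s u \<and> c = (s + 2, tr A' D' (marker # map Inl u)))
     \<or> (\<exists>u. u \<in> lists A \<and> accepts_from \<delta> F s0 u \<and> c = (1, tr A' D' (map Inl u)))"

lemma sym_D: "sym D"
  using dep_alphabet by (rule dep_alphabet_sym)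

lemma sym_D': "sym D'"
  using dep_alphabet_marked[OF dep_alphabet] by (rule dep_alphabet_sym)

lemma marker_in_A': "marker \<in> A'"
  unfolding marked_alphabet_def by simp

lemma map_Inl_in_lists_A': "u \<in> lists A \<Longrightarrow> map Inl u \<in> lists A'"
  unfolding marked_alphabet_def by auto

lemma rule_reads_marker: "(p, a, w, q) \<in> rules \<Longrightarrow> a = marker"
  unfolding rules_def by auto

lemma trace_pds_rules: "trace_pds A' D' states rules"
  unfolding trace_pds_def pds_def
proof (intro conjI allI impI)
  have "finite A"
    using dep_alphabet unfolding dep_alphabet_def by blast
  then have "finite \<delta>"
    using finite_S \<delta>_subset by (meson finite_SigmaI finite_subset)
  moreover have "finite F"
    using finite_S F_subset_S by (rule finite_subset[rotated])
  ultimately show "finite rules"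
    unfolding rules_def by simp
  show "finite states"
    unfolding states_def using finite_S by simp
  show "rules \<subseteq> states \<times> A' \<times> lists A' \<times> states"
    using s0_in_S F_subset_S \<delta>_subset marker_in_A'
    unfolding rules_def states_def marked_alphabet_def by auto
next
  fix p a w q
  assume "(p, a, w, q) \<in> rules"
  moreover have "D' \<subseteq> A' \<times> A'"
    using dep_alphabet_marked[OF dep_alphabet] unfolding dep_alphabet_def by blast
  ultimately show "Dof D' (set w) \<subseteq> Dof D' {a}"
    using marker_marked_dep rule_reads_marker unfolding Dof_def by blast
next
  fix p a v q b w r
  assume rules: "(p, a, v, q) \<in> rules \<and> (q, b, w, r) \<in> rules \<and> indep_words D' (a # v) (b # w)"
  then have "a = marker" "b = marker"
    using rule_reads_marker by blast+
  moreover have "(marker, marker) \<in> D'"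
    using marker_marked_dep marker_in_A' by blast
  ultimately have False
    using rules unfolding indep_words_def by simp
  then show "\<exists>q'. (p, b, w, q') \<in> rules \<and> (q', a, v, r) \<in> rules" ..
qed

lemma reaches_accepting_run:
  "accepts_from \<delta> F s u \<Longrightarrow> u \<in> lists A \<Longrightarrow> reaches (s + 2, tr A' D' (marker # map Inl u))"
proof (induction u arbitrary: s)
  case Nil
  then have "(0, marker, [marker], s + 2) \<in> rules"
    unfolding rules_def by auto
  from pds_stepI[OF this, of "[]"] show ?case
    by (simp add: r_into_rtranclp)
next
  case (Cons a u)
  then obtain s' where s': "(s, a, s') \<in> \<delta>" "accepts_from \<delta> F s' u"
    by auto
  have "(s' + 2, marker, [marker, Inl a], s + 2) \<in> rules"
    using s'(1) unfolding rules_def by force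
  from pds_stepI[OF this map_Inl_in_lists_A'] Cons s'(2) show ?case
    by (auto intro: rtranclp.rtrancl_into_rtrancl)
qed

lemma reaches_final_if_accepts:
  assumes "accepts_from \<delta> F s0 u" "u \<in> lists A"
  shows "reaches (1, tr A' D' (map Inl u))"
proof -
  have "(s0 + 2, marker, [], 1) \<in> rules"
    unfolding rules_def by simp
  from pds_stepI[OF this map_Inl_in_lists_A'] reaches_accepting_run[OF assms] assms(2)
  show ?thesis
    by (auto intro: rtranclp.rtrancl_into_rtrancl)
qed

lemma run_config_step:
  assumes "run_config (p, tr A' D' (a # x))" "(p, a, w, q) \<in> rules" "x \<in> lists A'"
  shows "run_config (q, tr A' D' (w @ x))"
proof -
  have cancel: "tr A' D' (marker # y) = tr A' D' (marker # x) \<longleftrightarrow> tr A' D' y = tr A' D' x" for y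
    using tr_Cons_dominant_eq_iff[OF sym_D' marker_marked_dep] .
  consider (guess) f where "f \<in> F" "p = 0" "a = marker" "w = [marker]" "q = f + 2"
    | (push) s b t where "(s, b, t) \<in> \<delta>" "p = t + 2" "a = marker" "w = [marker, Inl b]" "q = s + 2"
    | (pop) "p = s0 + 2" "a = marker" "w = []" "q = 1"
    using assms(2) unfolding rules_def by (elim UnE imageE insertE emptyE) auto
  then show ?thesis
  proof cases
    case guess
    then have "tr A' D' [marker] = tr A' D' (marker # x)"
      using assms(1) unfolding run_config_def by auto
    then have "x = []"
      using cancel[of "[]"] tr_eq_Nil_iff by metis
    then have "accepts_from \<delta> F f [] \<and> q = f + 2 \<and> tr A' D' (w @ x) = tr A' D' (marker # map Inl [])"
      using guess by simp
    then show ?thesis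
      unfolding run_config_def by blast
  next
    case push
    then obtain u where u: "u \<in> lists A" "accepts_from \<delta> F t u"
        "tr A' D' (marker # map Inl u) = tr A' D' (marker # x)"
      using assms(1) unfolding run_config_def by auto
    then have "tr A' D' (w @ x) = tr A' D' (marker # map Inl (b # u))"
      using cancel tr_append_left_cong[OF sym_D', of A' x "map Inl u" "[marker, Inl b]"] push
      by simp
    moreover have "b # u \<in> lists A" "accepts_from \<delta> F s (b # u)"
      using push u \<delta>_subset by auto
    ultimately show ?thesis
      unfolding run_config_def using push by blast
  next
    case pop
    then obtain u where "u \<in> lists A" "accepts_from \<delta> F s0 u"
        "tr A' D' (marker # map Inl u) = tr A' D' (marker # x)"
      using assms(1) unfolding run_config_def by auto
    then show ?thesis
      using cancel pop unfolding run_config_def by auto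
  qed
qed

lemma reaches_run_config: "reaches c \<Longrightarrow> run_config c"
proof (induction rule: rtranclp_induct)
  case base
  show ?case
    unfolding run_config_def by simp
next
  case (step c c')
  from step.hyps(2) obtain p a w q x where step_rule: "(p, a, w, q) \<in> rules" "x \<in> lists A'"
      and "c = (p, tr A' D' (a # x))" "c' = (q, tr A' D' (w @ x))"
    unfolding pds_step_def by blast
  with step.IH show ?case
    using run_config_step[OF _ step_rule] by simp
qed

lemma accepted_if_reaches_final:
  assumes "reaches (1, tr A' D' (map Inl w))"
  shows "\<exists>u \<in> lists A. nfa_accepts \<delta> s0 F u \<and> tr A D u = tr A D w"
proof -
  obtain u where u: "u \<in> lists A" "accepts_from \<delta> F s0 u"
      "tr A' D' (map Inl u) = tr A' D' (map Inl w)"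
    using reaches_run_config[OF assms] unfolding run_config_def by auto
  moreover have "(Inl a, Inl b) \<in> D'" if "(a, b) \<in> D" for a b
    using that by simp
  ultimately have "tr A D u = tr A D w"
    using tr_map_inj_eqD[OF inj_Inl _ sym_D sym_D'] by blast
  with u show ?thesis
    by (auto simp: nfa_accepts_iff_accepts_from)
qed

lemma accepted_traces_eq_reachable:
  "tr A D ` {w. w \<in> lists A \<and> nfa_accepts \<delta> s0 F w}
     = {tr A D w | w. w \<in> lists A \<and> reaches (1, tr A' D' (map Inl w))}"
    (is "?accepted = ?reachable")
proof (intro set_eqI iffI)
  fix T
  assume "T \<in> ?accepted"
  then obtain u where "T = tr A D u" "u \<in> lists A" "accepts_from \<delta> F s0 u"
    by (auto simp: nfa_accepts_iff_accepts_from)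
  moreover from this(2,3) have "reaches (1, tr A' D' (map Inl u))"
    by (intro reaches_final_if_accepts)
  ultimately show "T \<in> ?reachable"
    by blast
next
  fix T
  assume "T \<in> ?reachable"
  then obtain w where "T = tr A D w" "reaches (1, tr A' D' (map Inl w))"
    by blast
  moreover from this(2) obtain u where "u \<in> lists A" "nfa_accepts \<delta> s0 F u" "tr A D u = tr A D w"
    by (rule accepted_if_reaches_final[THEN bexE]) blast
  ultimately show "T \<in> ?accepted"
    by auto
qed

end

theorem proposition6p2:
  fixes A :: "'a set" and D :: "('a \<times> 'a) set" and \<L> :: "'a list set set"
  assumes "dep_alphabet A D"
    and "rational_trace_lang A D \<L>"
  shows "\<exists>(A' :: ('a + nat) set) D' (Q :: nat set) \<Delta> c q.
     dep_alphabet A' D' \<and> Inl ` A \<subseteq> A' \<and> D = {(a, b). (Inl a, Inl b) \<in> D'} \<and>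
     trace_pds A' D' Q \<Delta> \<and>
     (\<exists>p x. p \<in> Q \<and> x \<in> lists A' \<and> c = (p, tr A' D' x)) \<and> q \<in> Q \<and>
     \<L> = {tr A D w | w. w \<in> lists A \<and> (pds_step A' D' \<Delta>)\<^sup>*\<^sup>* c (q, tr A' D' (map Inl w))}"
proof -
  obtain L where \<L>: "\<L> = tr A D ` L" and "regular A L"
    using assms(2) unfolding rational_trace_lang_def by blast
  then obtain S :: "nat set" and \<delta> s0 F
    where "finite S" "s0 \<in> S" "F \<subseteq> S" "\<delta> \<subseteq> S \<times> A \<times> S"
      and L: "L = {w. w \<in> lists A \<and> nfa_accepts \<delta> s0 F w}"
    unfolding regular_def by blast
  with assms(1) interpret marked_nfa A D S \<delta> s0 F
    by unfold_locales
  have reach: "\<L> = {tr A D w | w. w \<in> lists A \<and> reaches (1, tr A' D' (map Inl w))}"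
    using \<L> L accepted_traces_eq_reachable by simp
  have init: "\<exists>p x. p \<in> states \<and> x \<in> lists A' \<and> (0, tr A' D' [marker]) = (p, tr A' D' x)"
    using marker_in_A' unfolding states_def by (intro exI[of _ 0] exI[of _ "[marker]"]) simp
  have alphabet: "Inl ` A \<subseteq> A'" "D = {(a, b). (Inl a, Inl b) \<in> D'}" "1 \<in> states"
    unfolding marked_alphabet_def states_def by auto
  show ?thesis
    by (rule exI[of _ A'], rule exI[of _ D'], rule exI[of _ states], rule exI[of _ rules],
        rule exI[of _ "(0, tr A' D' [marker])"], rule exI[of _ 1])
      (intro conjI dep_alphabet_marked[OF assms(1)] trace_pds_rules init alphabet reach)
qed

end
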